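(* Let $r\ge1$ be an integer, let $\Gamma$ be a finite graph without loops (edges oriented if $r$ is odd), and let $e$ be an edge of $\Gamma$ such that there is a different edge $e'$ of $\Gamma$ with the same two endpoints as $e$. Then the rings $R^r(\Gamma)$ and $R^r(\Gamma\setminus e)$ are isomorphic.
   Context: A circuit $w$ of length $k$ in a graph is an ordered sequence of edges $w_1,\dots,w_k$ with vertices $v_1,\dots,v_k,v_{k+1}=v_1$ such that $v_i,v_{i+1}$ are the endpoints of $w_i$; for $r$ odd, $\epsilon_i(w)=1$ if $w_i$ is oriented from $v_i$ to $v_{i+1}$ and $-1$ otherwise. $\Lambda^r(\Gamma)$: for $r$ even, the free graded-commutative $\mathbb{Z}$-algebra on generators $e_\beta$ of degree $r-1$, one per edge; for $r$ odd, the commutative graded $\mathbb{Z}$-algebra on such generators modulo $e_\beta^2=0$. Arnold class: $A(w)=\sum_i(-1)^i w_1\cdots\widehat{w_i}\cdots w_k$ ($r$ even), $A(w)=\sum_i\epsilon_i(w) w_1\cdots\widehat{w_i}\cdots w_k$ ($r$ odd), where $w_i$ stands for $e_{w_i}$; $A(w)=1$ for a one-edge circuit (loop). $R^r(\Gamma)=\Lambda^r(\Gamma)/I^r(\Gamma)$ where $I^r(\Gamma)$ is the ideal generated by all Arnold classes. $\Gamma\setminus e$ is $\Gamma$ with the edge $e$ deleted. *)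

theory Defs
  imports "HOL-Algebra.QuotRing" "HOL-Algebra.Ideal"
begin

text \<open>Graphs: finite vertex set V, finite edge set E, each edge x has endpoints
  src x and tgt x (for odd r this is the orientation src x to tgt x; for even r
  only the unordered pair of endpoints matters).  The linear order on edges is only
  used to fix signs in the explicit Z-basis description of the exterior algebra.\<close>

definition lam_sgn :: "nat \<Rightarrow> 'e::linorder set \<Rightarrow> 'e set \<Rightarrow> int" where
  "lam_sgn r T U = (if even r then (-1) ^ card {(t,u). t \<in> T \<and> u \<in> U \<and> u < t} else 1)"

text \<open>Elements of Lambda^r(Gamma): integer coefficient functions on squarefree monomials
  (finite sets of edges), supported on subsets of E.\<close>
definition lam_mult :: "nat \<Rightarrow> ('e::linorder set \<Rightarrow> int) \<Rightarrow> ('e set \<Rightarrow> int) \<Rightarrow> ('e set \<Rightarrow> int)" where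
  "lam_mult r f g = (\<lambda>S. \<Sum>T\<in>Pow S. lam_sgn r T (S - T) * f T * g (S - T))"

definition lam_one :: "'e set \<Rightarrow> int" where
  "lam_one = (\<lambda>S. if S = {} then 1 else 0)"

definition lam_gen :: "'e \<Rightarrow> 'e set \<Rightarrow> int" where
  "lam_gen x = (\<lambda>S. if S = {x} then 1 else 0)"

text \<open>The ring Lambda^r(Gamma): for r even the exterior algebra over Z on the edges
  (generators of odd degree r-1), for r odd the commutative algebra on the edges
  modulo e^2 = 0.\<close>
definition Lambda :: "nat \<Rightarrow> 'e::linorder set \<Rightarrow> ('e set \<Rightarrow> int) ring" where
  "Lambda r E = \<lparr>carrier = {f. \<forall>S. \<not> S \<subseteq> E \<longrightarrow> f S = 0},
                 mult = lam_mult r, one = lam_one, zero = (\<lambda>S. 0),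
                 add = (\<lambda>f g S. f S + g S)\<rparr>"

definition lam_mono :: "nat \<Rightarrow> 'e::linorder list \<Rightarrow> 'e set \<Rightarrow> int" where
  "lam_mono r ws = foldr (\<lambda>x acc. lam_mult r (lam_gen x) acc) ws lam_one"

text \<open>Circuits: edges ws = w_1..w_k, vertices vs = v_1..v_k, v_{k+1} = v_1
  (0-based indices here).\<close>
definition is_circuit :: "'e set \<Rightarrow> ('e \<Rightarrow> 'v) \<Rightarrow> ('e \<Rightarrow> 'v) \<Rightarrow> 'e list \<Rightarrow> 'v list \<Rightarrow> bool" where
  "is_circuit E src tgt ws vs \<longleftrightarrow>
     length ws \<ge> 1 \<and> length vs = length ws \<and>
     (\<forall>i < length ws. ws ! i \<in> E \<and>
        {src (ws ! i), tgt (ws ! i)} = {vs ! i, vs ! ((i + 1) mod length ws)})"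

definition circ_eps :: "('e \<Rightarrow> 'v) \<Rightarrow> ('e \<Rightarrow> 'v) \<Rightarrow> 'e list \<Rightarrow> 'v list \<Rightarrow> nat \<Rightarrow> int" where
  "circ_eps src tgt ws vs i =
     (if src (ws ! i) = vs ! i \<and> tgt (ws ! i) = vs ! ((i + 1) mod length ws) then 1 else -1)"

text \<open>Arnold class A(w); index i (0-based) corresponds to i+1 in the paper.\<close>
definition arnold :: "nat \<Rightarrow> ('e \<Rightarrow> 'v) \<Rightarrow> ('e \<Rightarrow> 'v) \<Rightarrow> 'e::linorder list \<Rightarrow> 'v list \<Rightarrow> 'e set \<Rightarrow> int" where
  "arnold r src tgt ws vs =
     (if length ws = 1 then lam_one
      else (\<lambda>S. \<Sum>i<length ws.
              (if even r then (-1) ^ (i + 1) else circ_eps src tgt ws vs i)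
              * lam_mono r (take i ws @ drop (Suc i) ws) S))"

definition arnold_ideal :: "nat \<Rightarrow> 'e::linorder set \<Rightarrow> ('e \<Rightarrow> 'v) \<Rightarrow> ('e \<Rightarrow> 'v) \<Rightarrow> ('e set \<Rightarrow> int) set" where
  "arnold_ideal r E src tgt =
     genideal (Lambda r E) {arnold r src tgt ws vs | ws vs. is_circuit E src tgt ws vs}"

definition Rring :: "nat \<Rightarrow> 'e::linorder set \<Rightarrow> ('e \<Rightarrow> 'v) \<Rightarrow> ('e \<Rightarrow> 'v) \<Rightarrow> ('e set \<Rightarrow> int) set ring" where
  "Rring r E src tgt = Lambda r E Quot arnold_ideal r E src tgt"

end

theory Submission
  imports Defs
begin

text \<open>Every element of \<open>\<Lambda>(E)\<close> splits uniquely as \<open>a + x\<^sub>e b\<close> with \<open>a\<close> and \<open>b\<close> free of the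
  edge \<open>e\<close>. As \<open>x\<^sub>e\<^sup>2 = 0\<close> and \<open>x\<^sub>e\<close> commutes with every element up to the parity twist, the
  substitution \<open>a + x\<^sub>e b \<mapsto> a + c x\<^sub>e\<^sub>' b\<close> is a ring retraction of \<open>\<Lambda>(E)\<close> onto \<open>\<Lambda>(E - e)\<close> for
  every integer \<open>c\<close>. For the sign \<open>c\<close> given by the relative orientation of the parallel edges,
  it maps the Arnold class of a circuit to a multiple of the Arnold class of the circuit with
  \<open>e\<close> replaced by \<open>e'\<close>, and it moves every element by a multiple of \<open>x\<^sub>e - c x\<^sub>e\<^sub>'\<close>, which is
  \<open>\<plusminus>\<close> the Arnold class of the circuit \<open>e, e'\<close> of length two. So the retraction induces an
  isomorphism of the quotients by the Arnold ideals.\<close>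

lemma (in ring) mult_square_zero_twisted:
  assumes x: "x \<in> carrier R" and xx: "x \<otimes> x = \<zero>"
    and tw: "\<And>y. y \<in> carrier R \<Longrightarrow> \<tau> y \<in> carrier R"
    and com: "\<And>y. y \<in> carrier R \<Longrightarrow> y \<otimes> x = x \<otimes> \<tau> y"
    and c: "a \<in> carrier R" "b \<in> carrier R" "a' \<in> carrier R" "b' \<in> carrier R"
  shows "(a \<oplus> x \<otimes> b) \<otimes> (a' \<oplus> x \<otimes> b') = a \<otimes> a' \<oplus> x \<otimes> (\<tau> a \<otimes> b' \<oplus> b \<otimes> a')"
proof -
  have 1: "a \<otimes> (x \<otimes> b') = x \<otimes> (\<tau> a \<otimes> b')"
    using x c tw com by (metis m_assoc)
  have 2: "(x \<otimes> b) \<otimes> a' = x \<otimes> (b \<otimes> a')"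
    using x c by (simp add: m_assoc)
  have "(x \<otimes> b) \<otimes> (x \<otimes> b') = x \<otimes> ((b \<otimes> x) \<otimes> b')"
    using x c by (simp add: m_assoc)
  also have "\<dots> = x \<otimes> ((x \<otimes> \<tau> b) \<otimes> b')"
    using com c by simp
  also have "\<dots> = (x \<otimes> x) \<otimes> (\<tau> b \<otimes> b')"
    using x c tw by (simp add: m_assoc)
  finally have 3: "(x \<otimes> b) \<otimes> (x \<otimes> b') = \<zero>"
    using xx c tw by simp
  have "(a \<oplus> x \<otimes> b) \<otimes> (a' \<oplus> x \<otimes> b') =
      (a \<otimes> a' \<oplus> a \<otimes> (x \<otimes> b')) \<oplus> ((x \<otimes> b) \<otimes> a' \<oplus> (x \<otimes> b) \<otimes> (x \<otimes> b'))"
    using x c by (simp add: l_distr r_distr a_ac)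
  also have "\<dots> = a \<otimes> a' \<oplus> x \<otimes> (\<tau> a \<otimes> b' \<oplus> b \<otimes> a')"
    unfolding 1 2 3 using x c tw by (simp add: a_assoc r_distr)
  finally show ?thesis .
qed

lemma (in ring_hom_ring) genideal_image_subset:
  assumes "ideal J S" "G \<subseteq> carrier R" "h ` G \<subseteq> J"
  shows "h ` genideal R G \<subseteq> J"
proof -
  have "genideal R G \<subseteq> {x \<in> carrier R. h x \<in> J}"
    using assms by (intro R.genideal_minimal ideal_vimage) auto
  then show ?thesis
    by blast
qed

lemma ring_iso_Quot_of_retraction:
  assumes hom: "ring_hom_ring R S h"
    and sub: "carrier S \<subseteq> carrier R" and retraction: "\<And>x. x \<in> carrier S \<Longrightarrow> h x = x"
    and I: "ideal I R" and J: "ideal J S" and hI: "h ` I \<subseteq> J" and JI: "J \<subseteq> I"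
    and diff: "\<And>x. x \<in> carrier R \<Longrightarrow> x \<ominus>\<^bsub>R\<^esub> h x \<in> I"
  shows "R Quot I \<simeq> S Quot J"
proof -
  interpret ring_hom_ring R S h
    by (rule hom)
  let ?q = "a_r_coset S J \<circ> h"
  have q_hom: "?q \<in> ring_hom R (S Quot J)"
    using homh ideal.rcos_ring_hom[OF J] by (rule ring_hom_trans)
  then have q: "ring_hom_ring R (S Quot J) ?q"
    using R.ring_axioms ideal.quotient_is_ring[OF J] by (intro ring_hom_ringI2)
  have "?q x = J \<longleftrightarrow> x \<in> I" if x: "x \<in> carrier R" for x
  proof
    assume "?q x = J"
    then have "h x \<in> I" "h x \<in> carrier R"
      using ideal.rcos_const_imp_mem[OF J] x JI sub by auto
    then have "(x \<ominus>\<^bsub>R\<^esub> h x) \<oplus>\<^bsub>R\<^esub> h x \<in> I"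
      using diff[OF x] additive_subgroup.a_closed[OF ideal.axioms(1)[OF I]] by blast
    then show "x \<in> I"
      using x \<open>h x \<in> carrier R\<close> by (simp add: a_minus_def R.a_assoc R.l_neg)
  next
    assume "x \<in> I"
    then show "?q x = J"
      using S.a_rcos_zero[OF J] hI by auto
  qed
  then have kernel: "a_kernel R (S Quot J) ?q = I"
    using ideal.Icarr[OF I] unfolding a_kernel_def' by (auto simp: FactRing_def)
  have "?q ` carrier R = carrier (S Quot J)"
  proof
    show "?q ` carrier R \<subseteq> carrier (S Quot J)"
      using ring_hom_closed[OF q_hom] by blast
    show "carrier (S Quot J) \<subseteq> ?q ` carrier R"
      using sub retraction unfolding FactRing_def A_RCOSETS_def' by force
  qed
  from ring_hom_ring.FactRing_iso[OF q this] show ?thesis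
    unfolding kernel .
qed

section \<open>Signs of monomial products\<close>

text \<open>A product form of \<^const>\<open>lam_sgn\<close>: it is multiplicative in each argument even for
  infinite sets.\<close>

definition inversion_sign :: "'e::linorder set \<Rightarrow> 'e set \<Rightarrow> int" where
  "inversion_sign A B = (\<Prod>t\<in>A. \<Prod>u\<in>B. if u < t then -1 else 1)"

definition mono_sign :: "nat \<Rightarrow> 'e::linorder set \<Rightarrow> 'e set \<Rightarrow> int" where
  "mono_sign r A B = (if even r then inversion_sign A B else 1)"

lemma lam_sgn_eq_mono_sign:
  assumes "finite A" "finite B"
  shows "lam_sgn r A B = mono_sign r A B"
proof -
  have "inversion_sign A B = (\<Prod>p\<in>A \<times> B. if snd p < fst p then -1 else 1)"
    unfolding inversion_sign_def by (simp add: prod.cartesian_product case_prod_beta)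
  also have "\<dots> = (-1) ^ card ((A \<times> B) \<inter> {p. snd p < fst p})"
    using assms by (simp add: prod.If_cases)
  also have "(A \<times> B) \<inter> {p. snd p < fst p} = {(t, u). t \<in> A \<and> u \<in> B \<and> u < t}"
    by auto
  finally show ?thesis
    unfolding lam_sgn_def mono_sign_def by simp
qed

lemma mono_sign_empty [simp]: "mono_sign r {} B = 1" "mono_sign r A {} = 1"
  unfolding mono_sign_def inversion_sign_def by auto

lemma mono_sign_Un_left:
  "finite A \<Longrightarrow> finite B \<Longrightarrow> A \<inter> B = {} \<Longrightarrow>
    mono_sign r (A \<union> B) C = mono_sign r A C * mono_sign r B C"
  unfolding mono_sign_def inversion_sign_def by (simp add: prod.union_disjoint)

lemma mono_sign_Un_right:
  "finite B \<Longrightarrow> finite C \<Longrightarrow> B \<inter> C = {} \<Longrightarrow>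
    mono_sign r A (B \<union> C) = mono_sign r A B * mono_sign r A C"
  unfolding mono_sign_def inversion_sign_def by (simp add: prod.union_disjoint prod.distrib)

lemma mono_sign_square [simp]: "mono_sign r A B * mono_sign r A B = 1"
proof -
  have "inversion_sign A B * inversion_sign A B =
      (\<Prod>t\<in>A. \<Prod>u\<in>B. (if u < t then -1 else 1) * (if u < t then -1 else 1 :: int))"
    unfolding inversion_sign_def by (simp add: prod.distrib)
  also have "\<dots> = 1"
    by (intro prod.neutral ballI) auto
  finally show ?thesis
    unfolding mono_sign_def by simp
qed

lemma mono_sign_singleton_swap:
  assumes "finite A" "x \<notin> A"
  shows "mono_sign r A {x} = mono_sign r {x} A * (if even r then (-1) ^ card A else 1)"
proof (cases "even r")
  case True
  have "inversion_sign A {x} * inversion_sign {x} A =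
      (\<Prod>t\<in>A. (if x < t then -1 else 1) * (if t < x then -1 else 1 :: int))"
    unfolding inversion_sign_def by (simp add: prod.distrib)
  also have "\<dots> = (\<Prod>t\<in>A. -1)"
    using assms by (intro prod.cong) auto
  finally have "inversion_sign A {x} * inversion_sign {x} A = (-1) ^ card A"
    by simp
  then have "inversion_sign A {x} = (-1) ^ card A * inversion_sign {x} A"
    using mono_sign_square[of r "{x}" A] True
    by (metis mono_sign_def mult.assoc mult.right_neutral)
  then show ?thesis
    using True unfolding mono_sign_def by simp
qed (simp add: mono_sign_def)

lemma mono_sign_assoc:
  assumes "finite S" "A \<subseteq> S" "B \<subseteq> S - A"
  shows "mono_sign r (A \<union> B) (S - (A \<union> B)) * mono_sign r A B =
    mono_sign r A (S - A) * mono_sign r B (S - A - B)"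
proof -
  have "B \<subseteq> S"
    using assms by auto
  then have fin: "finite A" "finite B" "finite (S - A - B)"
    using assms finite_subset by auto
  have "A \<inter> B = {}" "S - (A \<union> B) = S - A - B" "S - A = B \<union> (S - A - B)"
    using assms by auto
  then show ?thesis
    using mono_sign_Un_left[OF fin(1,2)] mono_sign_Un_right[OF fin(2,3), of r A] by auto
qed

lemma lam_mult_eq:
  "lam_mult r f g S =
    (if finite S then \<Sum>T\<in>Pow S. mono_sign r T (S - T) * f T * g (S - T) else 0)"
  unfolding lam_mult_def
  by (auto intro!: sum.cong simp: lam_sgn_eq_mono_sign finite_subset)

lemma lam_mult_infinite: "infinite S \<Longrightarrow> lam_mult r f g S = 0"
  by (simp add: lam_mult_eq)

lemma lam_mult_finite:
  "finite S \<Longrightarrow> lam_mult r f g S = (\<Sum>T\<in>Pow S. mono_sign r T (S - T) * f T * g (S - T))"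
  by (simp add: lam_mult_eq)

lemma lam_mult_assoc: "lam_mult r (lam_mult r f g) h = lam_mult r f (lam_mult r g h)"
proof
  fix S :: "'a set"
  show "lam_mult r (lam_mult r f g) h S = lam_mult r f (lam_mult r g h) S"
  proof (cases "finite S")
    case False
    then show ?thesis by (simp add: lam_mult_infinite)
  next
    case fin: True
    let ?F = "\<lambda>A T. mono_sign r T (S - T) * mono_sign r A (T - A) * f A * g (T - A) * h (S - T)"
    let ?G = "\<lambda>A B. mono_sign r A (S - A) * mono_sign r B (S - A - B) * f A * g B * h (S - A - B)"
    have "lam_mult r (lam_mult r f g) h S = (\<Sum>T\<in>Pow S. \<Sum>A\<in>{A\<in>Pow S. A \<subseteq> T}. ?F A T)"
    proof (simp add: lam_mult_finite fin, intro sum.cong refl)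
      fix T assume T: "T \<in> Pow S"
      then have "{A\<in>Pow S. A \<subseteq> T} = Pow T" "finite T"
        using fin finite_subset by auto
      then show "mono_sign r T (S - T) * lam_mult r f g T * h (S - T) = (\<Sum>A | A \<subseteq> S \<and> A \<subseteq> T. ?F A T)"
        by (simp add: lam_mult_finite sum_distrib_left sum_distrib_right Pow_def mult_ac)
    qed
    also have "\<dots> = (\<Sum>A\<in>Pow S. \<Sum>T\<in>{T\<in>Pow S. A \<subseteq> T}. ?F A T)"
      using fin by (intro sum.swap_restrict) auto
    also have "\<dots> = (\<Sum>A\<in>Pow S. \<Sum>B\<in>Pow (S - A). ?F A (A \<union> B))"
    proof (rule sum.cong[OF refl])
      fix A assume "A \<in> Pow S"
      then have "bij_betw (\<lambda>B. A \<union> B) (Pow (S - A)) {T\<in>Pow S. A \<subseteq> T}"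
        by (intro bij_betw_byWitness[where f' = "\<lambda>T. T - A"]) auto
      from sum.reindex_bij_betw[OF this, of "?F A"]
      show "(\<Sum>T\<in>{T\<in>Pow S. A \<subseteq> T}. ?F A T) = (\<Sum>B\<in>Pow (S - A). ?F A (A \<union> B))"
        by simp
    qed
    also have "\<dots> = (\<Sum>A\<in>Pow S. \<Sum>B\<in>Pow (S - A). ?G A B)"
    proof (intro sum.cong refl)
      fix A B assume A: "A \<in> Pow S" and B: "B \<in> Pow (S - A)"
      then have "A \<union> B - A = B" "S - (A \<union> B) = S - A - B"
        by auto
      then show "?F A (A \<union> B) = ?G A B"
        using mono_sign_assoc[OF fin, of A B r] A B by (simp add: mult_ac)
    qed
    also have "\<dots> = lam_mult r f (lam_mult r g h) S"
      using fin by (simp add: lam_mult_finite sum_distrib_left mult_ac)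
    finally show ?thesis .
  qed
qed

lemma lam_mult_add_right:
  "lam_mult r f (\<lambda>S. g S + h S) = (\<lambda>S. lam_mult r f g S + lam_mult r f h S)"
  by (rule ext) (simp add: lam_mult_eq sum.distrib algebra_simps)

lemma lam_mult_add_left:
  "lam_mult r (\<lambda>S. g S + h S) f = (\<lambda>S. lam_mult r g f S + lam_mult r h f S)"
  by (rule ext) (simp add: lam_mult_eq sum.distrib algebra_simps)

lemma lam_mult_one_left: "lam_mult r lam_one f S = (if finite S then f S else 0)"
proof (cases "finite S")
  case True
  then have "lam_mult r lam_one f S = (\<Sum>T\<in>{{}}. mono_sign r T (S - T) * lam_one T * f (S - T))"
    unfolding lam_mult_finite[OF True] by (intro sum.mono_neutral_right) (auto simp: lam_one_def)
  then show ?thesis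
    using True by (simp add: lam_one_def)
qed (simp add: lam_mult_infinite)

lemma lam_mult_one_right: "lam_mult r f lam_one S = (if finite S then f S else 0)"
proof (cases "finite S")
  case True
  then have "lam_mult r f lam_one S = (\<Sum>T\<in>{S}. mono_sign r T (S - T) * f T * lam_one (S - T))"
    unfolding lam_mult_finite[OF True] by (intro sum.mono_neutral_right) (auto simp: lam_one_def)
  then show ?thesis
    using True by (simp add: lam_one_def)
qed (simp add: lam_mult_infinite)

lemma lam_mult_zero_right: "lam_mult r f (\<lambda>S. 0) = (\<lambda>S. 0)"
  by (rule ext) (simp add: lam_mult_eq)

lemma carrier_Lambda: "carrier (Lambda r E) = {f. \<forall>S. \<not> S \<subseteq> E \<longrightarrow> f S = 0}"
  and mult_Lambda: "mult (Lambda r E) = lam_mult r"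
  and one_Lambda: "one (Lambda r E) = lam_one"
  and zero_Lambda: "zero (Lambda r E) = (\<lambda>S. 0)"
  and add_Lambda: "add (Lambda r E) = (\<lambda>f g S. f S + g S)"
  by (simp_all add: Lambda_def)

lemma Lambda_carrier_infinite:
  "finite E \<Longrightarrow> f \<in> carrier (Lambda r E) \<Longrightarrow> infinite S \<Longrightarrow> f S = 0"
  unfolding carrier_Lambda using finite_subset by blast

lemma Lambda_carrier_mono: "E' \<subseteq> E \<Longrightarrow> carrier (Lambda r E') \<subseteq> carrier (Lambda r E)"
  unfolding carrier_Lambda by blast

lemma lam_one_carrier: "lam_one \<in> carrier (Lambda r E)"
  unfolding carrier_Lambda lam_one_def by auto

lemma lam_gen_carrier: "x \<in> E \<Longrightarrow> lam_gen x \<in> carrier (Lambda r E)"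
  unfolding carrier_Lambda lam_gen_def by auto

lemma lam_add_carrier:
  "f \<in> carrier (Lambda r E) \<Longrightarrow> g \<in> carrier (Lambda r E) \<Longrightarrow>
    (\<lambda>S. f S + g S) \<in> carrier (Lambda r E)"
  unfolding carrier_Lambda by auto

lemma lam_lincomb_carrier:
  "(\<And>i. i \<in> I \<Longrightarrow> F i \<in> carrier (Lambda r E)) \<Longrightarrow>
    (\<lambda>S. \<Sum>i\<in>I. k i * F i S) \<in> carrier (Lambda r E)"
  unfolding carrier_Lambda by auto

lemma lam_mult_closed:
  assumes "f \<in> carrier (Lambda r E)" "g \<in> carrier (Lambda r E)"
  shows "lam_mult r f g \<in> carrier (Lambda r E)"
  unfolding carrier_Lambda mem_Collect_eq
proof (intro allI impI)
  fix S assume S: "\<not> S \<subseteq> E"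
  have "f T * g (S - T) = 0" if "T \<subseteq> S" for T
  proof (cases "T \<subseteq> E")
    case True
    then have "\<not> S - T \<subseteq> E"
      using S that by blast
    then show ?thesis
      using assms(2) unfolding carrier_Lambda by simp
  next
    case False
    then show ?thesis
      using assms(1) unfolding carrier_Lambda by simp
  qed
  then show "lam_mult r f g S = 0"
    by (auto simp: lam_mult_eq mult.assoc intro!: sum.neutral)
qed

lemma ring_Lambda:
  fixes E :: "'e::linorder set"
  assumes "finite E"
  shows "ring (Lambda r E)"
proof (rule ringI)
  show "abelian_group (Lambda r E)"
  proof (rule abelian_groupI, simp_all add: carrier_Lambda add_Lambda zero_Lambda)
    fix x :: "'e set \<Rightarrow> int" assume "\<forall>S. \<not> S \<subseteq> E \<longrightarrow> x S = 0"
    then show "\<exists>y. (\<forall>S. \<not> S \<subseteq> E \<longrightarrow> y S = 0) \<and> (\<lambda>S. y S + x S) = (\<lambda>S. 0)"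
      by (intro exI[of _ "\<lambda>S. - x S"]) auto
  qed (auto simp: fun_eq_iff)
  show "monoid (Lambda r E)"
  proof (rule monoidI, simp_all add: mult_Lambda one_Lambda lam_one_carrier lam_mult_assoc
      lam_mult_closed[unfolded mult_Lambda])
    fix x assume "x \<in> carrier (Lambda r E)"
    then show "lam_mult r lam_one x = x" "lam_mult r x lam_one = x"
      using Lambda_carrier_infinite[OF assms]
      by (auto simp: fun_eq_iff lam_mult_one_left lam_mult_one_right)
  qed
qed (simp_all add: mult_Lambda add_Lambda lam_mult_add_right lam_mult_add_left)

lemma a_minus_Lambda:
  assumes "finite E" "f \<in> carrier (Lambda r E)" "g \<in> carrier (Lambda r E)"
  shows "f \<ominus>\<^bsub>Lambda r E\<^esub> g = (\<lambda>S. f S - g S)"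
proof -
  interpret ring "Lambda r E"
    using assms(1) by (rule ring_Lambda)
  have "(\<lambda>S. - g S) \<in> carrier (Lambda r E)" "(\<lambda>S. - g S) \<oplus>\<^bsub>Lambda r E\<^esub> g = \<zero>\<^bsub>Lambda r E\<^esub>"
    using assms(3) by (auto simp: carrier_Lambda add_Lambda zero_Lambda)
  then have "\<ominus>\<^bsub>Lambda r E\<^esub> g = (\<lambda>S. - g S)"
    using assms(3) minus_equality by blast
  then show ?thesis
    by (simp add: a_minus_def add_Lambda)
qed

definition lam_smul :: "int \<Rightarrow> ('e set \<Rightarrow> int) \<Rightarrow> 'e set \<Rightarrow> int" where
  "lam_smul k f = (\<lambda>S. k * f S)"

definition parity_twist :: "nat \<Rightarrow> ('e set \<Rightarrow> int) \<Rightarrow> 'e set \<Rightarrow> int" where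
  "parity_twist r f = (\<lambda>S. (if even r then (-1) ^ card S else 1) * f S)"

lemma lam_smul_carrier: "f \<in> carrier (Lambda r E) \<Longrightarrow> lam_smul k f \<in> carrier (Lambda r E)"
  unfolding carrier_Lambda lam_smul_def by auto

lemma parity_twist_carrier:
  "f \<in> carrier (Lambda r E) \<Longrightarrow> parity_twist r f \<in> carrier (Lambda r E)"
  unfolding carrier_Lambda parity_twist_def by auto

lemma lam_smul_smul: "lam_smul k (lam_smul l f) = lam_smul (l * k) f"
  by (simp add: lam_smul_def mult_ac)

lemma lam_mult_smul_left: "lam_mult r (lam_smul k f) g = lam_smul k (lam_mult r f g)"
  by (rule ext) (simp add: lam_mult_eq lam_smul_def sum_distrib_left mult_ac)

lemma lam_mult_smul_right: "lam_mult r f (lam_smul k g) = lam_smul k (lam_mult r f g)"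
  by (rule ext) (simp add: lam_mult_eq lam_smul_def sum_distrib_left mult_ac)

lemma lam_mult_lincomb_right:
  "lam_mult r x (\<lambda>S. \<Sum>i\<in>I. k i * F i S) = (\<lambda>S. \<Sum>i\<in>I. k i * lam_mult r x (F i) S)"
proof
  fix S
  show "lam_mult r x (\<lambda>S. \<Sum>i\<in>I. k i * F i S) S = (\<Sum>i\<in>I. k i * lam_mult r x (F i) S)"
  proof (cases "finite S")
    case True
    have "lam_mult r x (\<lambda>S. \<Sum>i\<in>I. k i * F i S) S =
        (\<Sum>T\<in>Pow S. \<Sum>i\<in>I. k i * (mono_sign r T (S - T) * x T * F i (S - T)))"
      unfolding lam_mult_finite[OF True] by (simp add: sum_distrib_left mult_ac)
    also have "\<dots> = (\<Sum>i\<in>I. k i * lam_mult r x (F i) S)"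
      unfolding lam_mult_finite[OF True] by (subst sum.swap) (simp add: sum_distrib_left)
    finally show ?thesis .
  qed (simp add: lam_mult_infinite)
qed

lemma lam_mult_gen_left:
  "lam_mult r (lam_gen x) b S =
    (if finite S \<and> x \<in> S then mono_sign r {x} (S - {x}) * b (S - {x}) else 0)"
proof (cases "finite S \<and> x \<in> S")
  case True
  then have "(\<Sum>T\<in>Pow S. mono_sign r T (S - T) * lam_gen x T * b (S - T)) =
      (\<Sum>T\<in>{{x}}. mono_sign r T (S - T) * lam_gen x T * b (S - T))"
    by (intro sum.mono_neutral_right) (auto simp: lam_gen_def)
  then show ?thesis
    using True by (simp add: lam_mult_eq lam_gen_def)
next
  case False
  then show ?thesis
    by (auto simp: lam_mult_eq lam_gen_def intro!: sum.neutral)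
qed

lemma lam_mult_gen_right:
  "lam_mult r f (lam_gen x) S =
    (if finite S \<and> x \<in> S then mono_sign r (S - {x}) {x} * f (S - {x}) else 0)"
proof (cases "finite S \<and> x \<in> S")
  case True
  then have "(\<Sum>T\<in>Pow S. mono_sign r T (S - T) * f T * lam_gen x (S - T)) =
      (\<Sum>T\<in>{S - {x}}. mono_sign r T (S - T) * f T * lam_gen x (S - T))"
    by (intro sum.mono_neutral_right) (auto simp: lam_gen_def)
  moreover have "S - (S - {x}) = {x}"
    using True by auto
  ultimately show ?thesis
    using True by (simp add: lam_mult_eq lam_gen_def)
next
  case False
  then have "S - T \<noteq> {x}" if "finite S" "T \<subseteq> S" for T
    using that by auto
  then show ?thesis
    using False by (simp add: lam_mult_eq lam_gen_def)
qed

lemma lam_gen_commute: "lam_mult r f (lam_gen x) = lam_mult r (lam_gen x) (parity_twist r f)"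
proof
  fix S
  show "lam_mult r f (lam_gen x) S = lam_mult r (lam_gen x) (parity_twist r f) S"
  proof (cases "finite S \<and> x \<in> S")
    case True
    then have "finite (S - {x})" "x \<notin> S - {x}"
      by auto
    from mono_sign_singleton_swap[OF this, of r] show ?thesis
      using True by (simp add: lam_mult_gen_left lam_mult_gen_right parity_twist_def)
  next
    case False
    then show ?thesis
      unfolding lam_mult_gen_left lam_mult_gen_right if_not_P[OF False] by simp
  qed
qed

lemma lam_gen_square: "lam_mult r (lam_gen x) (lam_gen x) = (\<lambda>S. 0)"
  unfolding lam_mult_gen_left by (auto simp: fun_eq_iff lam_gen_def)

lemma lam_smul_gen_square: "lam_mult r (lam_smul c (lam_gen x)) (lam_smul c (lam_gen x)) = (\<lambda>S. 0)"
  unfolding lam_mult_smul_left lam_mult_smul_right lam_gen_square by (simp add: lam_smul_def)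

lemma lam_smul_gen_commute:
  "lam_mult r f (lam_smul c (lam_gen x)) = lam_mult r (lam_smul c (lam_gen x)) (parity_twist r f)"
  by (simp add: lam_mult_smul_left lam_mult_smul_right lam_gen_commute)

lemma lam_mono_Nil [simp]: "lam_mono r [] = lam_one"
  by (simp add: lam_mono_def)

lemma lam_mono_Cons [simp]: "lam_mono r (x # ws) = lam_mult r (lam_gen x) (lam_mono r ws)"
  by (simp add: lam_mono_def)

lemma lam_mono_carrier: "set ws \<subseteq> E \<Longrightarrow> lam_mono r ws \<in> carrier (Lambda r E)"
  by (induction ws) (auto intro!: lam_mult_closed lam_gen_carrier lam_one_carrier)

lemma lam_smul_in_ideal:
  assumes "finite E" "ideal I (Lambda r E)" "f \<in> I"
  shows "lam_smul k f \<in> I"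
proof -
  have "f \<in> carrier (Lambda r E)"
    using assms(2,3) by (rule ideal.Icarr)
  then have "lam_smul k f = lam_mult r (lam_smul k lam_one) f"
    unfolding lam_mult_smul_left using Lambda_carrier_infinite[OF assms(1)]
    by (auto simp: fun_eq_iff lam_mult_one_left lam_smul_def)
  also have "\<dots> \<in> I"
    using ideal.I_l_closed[OF assms(2,3) lam_smul_carrier[OF lam_one_carrier]]
    by (simp add: mult_Lambda)
  finally show ?thesis .
qed

section \<open>Splitting off an edge\<close>

definition lam_avoid :: "'e \<Rightarrow> ('e set \<Rightarrow> int) \<Rightarrow> 'e set \<Rightarrow> int" where
  "lam_avoid e f = (\<lambda>S. if e \<in> S then 0 else f S)"

definition lam_cofactor :: "nat \<Rightarrow> 'e::linorder \<Rightarrow> ('e set \<Rightarrow> int) \<Rightarrow> 'e set \<Rightarrow> int" where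
  "lam_cofactor r e f = (\<lambda>S. if e \<in> S then 0 else mono_sign r {e} S * f (insert e S))"

lemma lam_avoid_carrier:
  "f \<in> carrier (Lambda r E) \<Longrightarrow> lam_avoid e f \<in> carrier (Lambda r (E - {e}))"
  unfolding carrier_Lambda lam_avoid_def by auto

lemma lam_cofactor_carrier:
  "f \<in> carrier (Lambda r E) \<Longrightarrow> lam_cofactor r e f \<in> carrier (Lambda r (E - {e}))"
  unfolding carrier_Lambda lam_cofactor_def by (auto split: if_splits) blast

lemma lam_avoid_add: "lam_avoid e (\<lambda>S. f S + g S) = (\<lambda>S. lam_avoid e f S + lam_avoid e g S)"
  by (rule ext) (simp add: lam_avoid_def)

lemma lam_cofactor_add:
  "lam_cofactor r e (\<lambda>S. f S + g S) = (\<lambda>S. lam_cofactor r e f S + lam_cofactor r e g S)"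
  by (rule ext) (simp add: lam_cofactor_def algebra_simps)

lemma lam_split_edge:
  assumes "finite E" "f \<in> carrier (Lambda r E)"
  shows "f = (\<lambda>S. lam_avoid e f S + lam_mult r (lam_gen e) (lam_cofactor r e f) S)"
proof
  fix S
  have "insert e (S - {e}) = S" if "e \<in> S"
    using that by auto
  then show "f S = lam_avoid e f S + lam_mult r (lam_gen e) (lam_cofactor r e f) S"
    using Lambda_carrier_infinite[OF assms] mono_sign_square[of r "{e}" "S - {e}"]
    by (auto simp: lam_mult_gen_left lam_avoid_def lam_cofactor_def mult.assoc[symmetric])
qed

lemma lam_split_edge_unique:
  assumes "finite E" "a \<in> carrier (Lambda r (E - {e}))" "b \<in> carrier (Lambda r (E - {e}))"
  shows "lam_avoid e (\<lambda>S. a S + lam_mult r (lam_gen e) b S) = a"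
    and "lam_cofactor r e (\<lambda>S. a S + lam_mult r (lam_gen e) b S) = b"
proof -
  have a0: "e \<in> S \<Longrightarrow> a S = 0" and b0: "e \<in> S \<Longrightarrow> b S = 0" for S
    using assms(2,3) unfolding carrier_Lambda by auto
  have "infinite S \<Longrightarrow> b S = 0" for S
    using Lambda_carrier_infinite[OF _ assms(3)] assms(1) by auto
  moreover have "insert e S - {e} = S" if "e \<notin> S" for S
    using that by auto
  ultimately show "lam_cofactor r e (\<lambda>S. a S + lam_mult r (lam_gen e) b S) = b"
    using a0 b0 mono_sign_square[of r "{e}"]
    by (auto simp: fun_eq_iff lam_cofactor_def lam_mult_gen_left mult.assoc[symmetric])
  show "lam_avoid e (\<lambda>S. a S + lam_mult r (lam_gen e) b S) = a"
    by (rule ext) (auto simp: lam_avoid_def lam_mult_gen_left a0)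
qed

lemma lam_mult_split_square_zero:
  assumes "finite E" "x \<in> carrier (Lambda r E)" "lam_mult r x x = (\<lambda>S. 0)"
    and "\<And>y. lam_mult r y x = lam_mult r x (parity_twist r y)"
    and "a \<in> carrier (Lambda r E)" "b \<in> carrier (Lambda r E)"
    and "a' \<in> carrier (Lambda r E)" "b' \<in> carrier (Lambda r E)"
  shows "lam_mult r (\<lambda>S. a S + lam_mult r x b S) (\<lambda>S. a' S + lam_mult r x b' S) =
    (\<lambda>S. lam_mult r a a' S +
      lam_mult r x (\<lambda>S. lam_mult r (parity_twist r a) b' S + lam_mult r b a' S) S)"
  using ring.mult_square_zero_twisted[OF ring_Lambda[OF assms(1)] assms(2) _ parity_twist_carrier
      _ assms(5-8)] assms(3,4)
  by (simp add: add_Lambda mult_Lambda zero_Lambda)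

section \<open>Substituting a parallel edge\<close>

definition edge_subst :: "nat \<Rightarrow> 'e::linorder \<Rightarrow> 'e \<Rightarrow> int \<Rightarrow> ('e set \<Rightarrow> int) \<Rightarrow> 'e set \<Rightarrow> int" where
  "edge_subst r e e' c f =
    (\<lambda>S. lam_avoid e f S + lam_mult r (lam_smul c (lam_gen e')) (lam_cofactor r e f) S)"

lemma edge_subst_add:
  "edge_subst r e e' c (\<lambda>S. f S + g S) = (\<lambda>S. edge_subst r e e' c f S + edge_subst r e e' c g S)"
  unfolding edge_subst_def lam_avoid_add lam_cofactor_add lam_mult_add_right by (rule ext) simp

lemma edge_subst_lincomb:
  "edge_subst r e e' c (\<lambda>S. \<Sum>i\<in>I. k i * F i S) = (\<lambda>S. \<Sum>i\<in>I. k i * edge_subst r e e' c (F i) S)"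
proof -
  have avoid: "lam_avoid e (\<lambda>S. \<Sum>i\<in>I. k i * F i S) = (\<lambda>S. \<Sum>i\<in>I. k i * lam_avoid e (F i) S)"
    and cofactor: "lam_cofactor r e (\<lambda>S. \<Sum>i\<in>I. k i * F i S) =
      (\<lambda>S. \<Sum>i\<in>I. k i * lam_cofactor r e (F i) S)"
    by (simp_all add: fun_eq_iff lam_avoid_def lam_cofactor_def sum_distrib_left mult_ac)
  show ?thesis
    unfolding edge_subst_def avoid cofactor lam_mult_lincomb_right
    by (simp add: fun_eq_iff sum.distrib algebra_simps)
qed

lemma edge_subst_diff:
  assumes "finite E" "f \<in> carrier (Lambda r E)"
  shows "(\<lambda>S. f S - edge_subst r e e' c f S) =
    lam_mult r (\<lambda>S. lam_gen e S - c * lam_gen e' S) (lam_cofactor r e f)"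
proof -
  let ?b = "lam_cofactor r e f"
  have "lam_mult r (\<lambda>S. lam_gen e S - c * lam_gen e' S) ?b =
      (\<lambda>S. lam_mult r (lam_gen e) ?b S - c * lam_mult r (lam_gen e') ?b S)"
    by (simp add: fun_eq_iff lam_mult_eq sum_subtractf sum_distrib_left algebra_simps)
  moreover have "edge_subst r e e' c f = (\<lambda>S. lam_avoid e f S + c * lam_mult r (lam_gen e') ?b S)"
    unfolding edge_subst_def lam_mult_smul_left by (simp add: lam_smul_def)
  ultimately show ?thesis
    by (subst (1) lam_split_edge[OF assms, of e]) simp
qed

context
  fixes r :: nat and E :: "'e::linorder set" and e e' :: 'e and c :: int
  assumes finite_E: "finite E" and e_in_E: "e \<in> E" and e'_in_E: "e' \<in> E" and e'_ne_e: "e' \<noteq> e"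
begin

lemma scaled_gen_carrier: "lam_smul c (lam_gen e') \<in> carrier (Lambda r (E - {e}))"
  using e'_ne_e e'_in_E by (intro lam_smul_carrier lam_gen_carrier) auto

lemma edge_subst_carrier:
  "f \<in> carrier (Lambda r E) \<Longrightarrow> edge_subst r e e' c f \<in> carrier (Lambda r (E - {e}))"
  unfolding edge_subst_def
  by (intro lam_add_carrier lam_avoid_carrier lam_mult_closed scaled_gen_carrier lam_cofactor_carrier)

lemma edge_subst_split:
  assumes "a \<in> carrier (Lambda r (E - {e}))" "b \<in> carrier (Lambda r (E - {e}))"
  shows "edge_subst r e e' c (\<lambda>S. a S + lam_mult r (lam_gen e) b S) =
    (\<lambda>S. a S + lam_mult r (lam_smul c (lam_gen e')) b S)"
  unfolding edge_subst_def lam_split_edge_unique[OF finite_E assms] ..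

lemma edge_subst_retraction: "f \<in> carrier (Lambda r (E - {e})) \<Longrightarrow> edge_subst r e e' c f = f"
  using edge_subst_split[of f "\<lambda>S. 0"] by (simp add: carrier_Lambda lam_mult_zero_right)

lemma edge_subst_mult:
  assumes f: "f \<in> carrier (Lambda r E)" and g: "g \<in> carrier (Lambda r E)"
  shows "edge_subst r e e' c (lam_mult r f g) = lam_mult r (edge_subst r e e' c f) (edge_subst r e e' c g)"
proof -
  let ?a = "lam_avoid e f" and ?b = "lam_cofactor r e f"
  let ?a' = "lam_avoid e g" and ?b' = "lam_cofactor r e g"
  let ?x = "lam_smul c (lam_gen e')"
  have parts: "?a \<in> carrier (Lambda r (E - {e}))" "?b \<in> carrier (Lambda r (E - {e}))"
    "?a' \<in> carrier (Lambda r (E - {e}))" "?b' \<in> carrier (Lambda r (E - {e}))"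
    using f g by (auto intro: lam_avoid_carrier lam_cofactor_carrier)
  then have parts_E: "?a \<in> carrier (Lambda r E)" "?b \<in> carrier (Lambda r E)"
    "?a' \<in> carrier (Lambda r E)" "?b' \<in> carrier (Lambda r E)"
    using Lambda_carrier_mono[of "E - {e}" E r] by auto
  have x_carrier: "?x \<in> carrier (Lambda r E)"
    using scaled_gen_carrier Lambda_carrier_mono[of "E - {e}" E r] by auto
  have "lam_mult r f g = lam_mult r (\<lambda>S. ?a S + lam_mult r (lam_gen e) ?b S) (\<lambda>S. ?a' S + lam_mult r (lam_gen e) ?b' S)"
    by (simp only: lam_split_edge[OF finite_E f, symmetric] lam_split_edge[OF finite_E g, symmetric])
  also have "\<dots> = (\<lambda>S. lam_mult r ?a ?a' S +
      lam_mult r (lam_gen e) (\<lambda>S. lam_mult r (parity_twist r ?a) ?b' S + lam_mult r ?b ?a' S) S)"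
    using lam_mult_split_square_zero[OF finite_E lam_gen_carrier[OF e_in_E] lam_gen_square
        lam_gen_commute parts_E] .
  finally have fg: "lam_mult r f g = \<dots>" .
  have "lam_mult r ?a ?a' \<in> carrier (Lambda r (E - {e}))"
    "(\<lambda>S. lam_mult r (parity_twist r ?a) ?b' S + lam_mult r ?b ?a' S) \<in> carrier (Lambda r (E - {e}))"
    using parts by (auto intro!: lam_mult_closed lam_add_carrier parity_twist_carrier)
  then have "edge_subst r e e' c (lam_mult r f g) = (\<lambda>S. lam_mult r ?a ?a' S +
      lam_mult r ?x (\<lambda>S. lam_mult r (parity_twist r ?a) ?b' S + lam_mult r ?b ?a' S) S)"
    unfolding fg by (rule edge_subst_split)
  also have "\<dots> = lam_mult r (\<lambda>S. ?a S + lam_mult r ?x ?b S) (\<lambda>S. ?a' S + lam_mult r ?x ?b' S)"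
    by (rule lam_mult_split_square_zero[OF finite_E x_carrier lam_smul_gen_square lam_smul_gen_commute parts_E, symmetric])
  also have "\<dots> = lam_mult r (edge_subst r e e' c f) (edge_subst r e e' c g)"
    unfolding edge_subst_def ..
  finally show ?thesis .
qed

lemma edge_subst_one: "edge_subst r e e' c lam_one = lam_one"
  using edge_subst_retraction[OF lam_one_carrier] .

lemma edge_subst_ring_hom: "ring_hom_ring (Lambda r E) (Lambda r (E - {e})) (edge_subst r e e' c)"
proof (rule ring_hom_ringI2)
  show "edge_subst r e e' c \<in> ring_hom (Lambda r E) (Lambda r (E - {e}))"
    by (rule ring_hom_memI)
      (simp_all add: edge_subst_carrier mult_Lambda add_Lambda one_Lambda edge_subst_mult
        edge_subst_add edge_subst_one)
qed (use finite_E in \<open>simp_all add: ring_Lambda\<close>)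

lemma edge_subst_gen:
  "x \<in> E \<Longrightarrow> edge_subst r e e' c (lam_gen x) = (if x = e then lam_smul c (lam_gen e') else lam_gen x)"
proof (cases "x = e")
  case True
  have "lam_avoid e (lam_gen e) = (\<lambda>S. 0)" "lam_cofactor r e (lam_gen e) = lam_one"
    by (auto simp: fun_eq_iff lam_avoid_def lam_cofactor_def lam_gen_def lam_one_def)
  moreover have "lam_mult r (lam_smul c (lam_gen e')) lam_one = lam_smul c (lam_gen e')"
    by (auto simp: fun_eq_iff lam_mult_one_right lam_smul_def lam_gen_def)
  ultimately show ?thesis
    using True by (simp add: edge_subst_def)
qed (simp add: edge_subst_retraction lam_gen_carrier)

lemma edge_subst_lam_mono:
  "set ws \<subseteq> E \<Longrightarrow>
    edge_subst r e e' c (lam_mono r ws) = lam_smul (c ^ count_list ws e) (lam_mono r (map (id(e := e')) ws))"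
proof (induction ws)
  case Nil
  then show ?case
    by (simp add: edge_subst_one lam_smul_def)
next
  case (Cons x ws)
  then have x: "x \<in> E" and ws: "set ws \<subseteq> E"
    by auto
  have "edge_subst r e e' c (lam_mono r (x # ws)) =
      lam_mult r (edge_subst r e e' c (lam_gen x)) (edge_subst r e e' c (lam_mono r ws))"
    unfolding lam_mono_Cons using x ws by (intro edge_subst_mult lam_gen_carrier lam_mono_carrier)
  then show ?case
    using Cons.IH[OF ws] x
    by (simp add: edge_subst_gen lam_mult_smul_left lam_mult_smul_right lam_smul_smul)
qed

end

section \<open>Circuits and Arnold ideals\<close>

lemma is_circuit_mono: "is_circuit E' src tgt ws vs \<Longrightarrow> E' \<subseteq> E \<Longrightarrow> is_circuit E src tgt ws vs"
  unfolding is_circuit_def by auto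

lemma is_circuit_edges: "is_circuit E src tgt ws vs \<Longrightarrow> set ws \<subseteq> E"
  unfolding is_circuit_def by (auto simp: in_set_conv_nth)

lemma is_circuit_length_ne_1:
  assumes "is_circuit E src tgt ws vs" "\<forall>x\<in>E. src x \<noteq> tgt x"
  shows "length ws \<noteq> 1"
proof
  assume "length ws = 1"
  then have "ws ! 0 \<in> E" "{src (ws ! 0), tgt (ws ! 0)} = {vs ! 0}"
    using assms(1) unfolding is_circuit_def by auto
  then have "src (ws ! 0) = tgt (ws ! 0)" "ws ! 0 \<in> E"
    by auto
  then show False
    using assms(2) by blast
qed

definition arnold_coeff :: "nat \<Rightarrow> ('e \<Rightarrow> 'v) \<Rightarrow> ('e \<Rightarrow> 'v) \<Rightarrow> 'e list \<Rightarrow> 'v list \<Rightarrow> nat \<Rightarrow> int" where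
  "arnold_coeff r src tgt ws vs i = (if even r then (-1) ^ (i + 1) else circ_eps src tgt ws vs i)"

lemma arnold_eq_sum:
  "length ws \<noteq> 1 \<Longrightarrow> arnold r src tgt ws vs =
    (\<lambda>S. \<Sum>i<length ws. arnold_coeff r src tgt ws vs i * lam_mono r (take i ws @ drop (Suc i) ws) S)"
  by (simp add: arnold_def arnold_coeff_def)

lemma arnold_carrier:
  assumes "is_circuit E src tgt ws vs"
  shows "arnold r src tgt ws vs \<in> carrier (Lambda r E)"
proof -
  have "lam_mono r (take i ws @ drop (Suc i) ws) \<in> carrier (Lambda r E)" for i
    using is_circuit_edges[OF assms] by (intro lam_mono_carrier) (auto dest: in_set_takeD in_set_dropD)
  then show ?thesis
    unfolding arnold_def by (auto intro!: lam_lincomb_carrier lam_one_carrier)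
qed

lemma arnold_ideal_is_ideal: "finite E \<Longrightarrow> ideal (arnold_ideal r E src tgt) (Lambda r E)"
  unfolding arnold_ideal_def by (rule ring.genideal_ideal[OF ring_Lambda]) (auto intro: arnold_carrier)

lemma arnold_in_arnold_ideal:
  assumes "finite E" "is_circuit E src tgt ws vs"
  shows "arnold r src tgt ws vs \<in> arnold_ideal r E src tgt"
proof -
  have "{arnold r src tgt ws vs | ws vs. is_circuit E src tgt ws vs} \<subseteq> carrier (Lambda r E)"
    by (auto intro: arnold_carrier)
  then have "{arnold r src tgt ws vs | ws vs. is_circuit E src tgt ws vs} \<subseteq> arnold_ideal r E src tgt"
    unfolding arnold_ideal_def by (rule ring.genideal_self[OF ring_Lambda[OF assms(1)]])
  then show ?thesis
    using assms(2) by blast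
qed

lemma arnold_ideal_mono:
  assumes "finite E" "E' \<subseteq> E"
  shows "arnold_ideal r E' src tgt \<subseteq> arnold_ideal r E src tgt"
proof -
  let ?G = "{arnold r src tgt ws vs | ws vs. is_circuit E' src tgt ws vs}"
  have "finite E'"
    using assms finite_subset by blast
  moreover have "id \<in> ring_hom (Lambda r E') (Lambda r E)"
    by (rule ring_hom_memI)
      (use Lambda_carrier_mono[OF assms(2), of r] in \<open>auto simp: mult_Lambda add_Lambda one_Lambda\<close>)
  ultimately have "ring_hom_ring (Lambda r E') (Lambda r E) id"
    using assms(1) by (intro ring_hom_ringI2 ring_Lambda)
  moreover have "?G \<subseteq> carrier (Lambda r E')"
    using arnold_carrier by blast
  moreover have "id ` ?G \<subseteq> arnold_ideal r E src tgt"
  proof clarify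
    fix ws vs assume "is_circuit E' src tgt ws vs"
    then show "id (arnold r src tgt ws vs) \<in> arnold_ideal r E src tgt"
      using assms is_circuit_mono arnold_in_arnold_ideal by (metis id_apply)
  qed
  ultimately have "id ` arnold_ideal r E' src tgt \<subseteq> arnold_ideal r E src tgt"
    unfolding arnold_ideal_def[of r E']
    by (rule ring_hom_ring.genideal_image_subset[OF _ arnold_ideal_is_ideal[OF assms(1)]])
  then show ?thesis
    by simp
qed

section \<open>Parallel edges\<close>

definition parallel_sign :: "nat \<Rightarrow> ('e \<Rightarrow> 'v) \<Rightarrow> 'e \<Rightarrow> 'e \<Rightarrow> int" where
  "parallel_sign r src e e' = (if even r \<or> src e' = src e then 1 else -1)"

lemma count_list_remove_nth:
  assumes "i < length ws"
  shows "count_list ws x = count_list (take i ws @ drop (Suc i) ws) x + (if ws ! i = x then 1 else 0)"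
proof -
  have "count_list ws x = count_list (take i ws @ ws ! i # drop (Suc i) ws) x"
    using id_take_nth_drop[OF assms] by simp
  then show ?thesis
    by simp
qed

context
  fixes r :: nat and E :: "'e::linorder set" and e e' :: 'e and src tgt :: "'e \<Rightarrow> 'v"
  assumes finite_E: "finite E" and e_in_E: "e \<in> E" and e'_in_E: "e' \<in> E" and e'_ne_e: "e' \<noteq> e"
    and loop_free: "\<forall>x\<in>E. src x \<noteq> tgt x" and parallel: "{src e', tgt e'} = {src e, tgt e}"
begin

lemma parallel_orientation: "(src e' = src e \<and> tgt e' = tgt e) \<or> (src e' = tgt e \<and> tgt e' = src e)"
  using parallel by (simp add: doubleton_eq_iff)

lemma is_circuit_subst:
  assumes "is_circuit E src tgt ws vs"
  shows "is_circuit (E - {e}) src tgt (map (id(e := e')) ws) vs"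
  using assms parallel e'_in_E e'_ne_e unfolding is_circuit_def by auto

lemma circ_eps_subst:
  assumes "is_circuit E src tgt ws vs" "i < length ws" "odd r"
  shows "circ_eps src tgt (map (id(e := e')) ws) vs i =
    (if ws ! i = e then parallel_sign r src e e' else 1) * circ_eps src tgt ws vs i"
proof (cases "ws ! i = e")
  case True
  then have "{src e, tgt e} = {vs ! i, vs ! ((i + 1) mod length ws)}"
    using assms(1,2) unfolding is_circuit_def by metis
  then show ?thesis
    using True assms(2,3) parallel_orientation loop_free e_in_E
    by (auto simp: circ_eps_def parallel_sign_def doubleton_eq_iff)
qed (use assms(2) in \<open>simp add: circ_eps_def\<close>)

lemma arnold_coeff_subst:
  assumes circ: "is_circuit E src tgt ws vs" and i: "i < length ws"
  shows "arnold_coeff r src tgt ws vs i * parallel_sign r src e e' ^ count_list (take i ws @ drop (Suc i) ws) e =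
    parallel_sign r src e e' ^ count_list ws e * arnold_coeff r src tgt (map (id(e := e')) ws) vs i"
proof (cases "even r")
  case True
  then show ?thesis
    by (simp add: arnold_coeff_def parallel_sign_def)
next
  case odd: False
  let ?c = "parallel_sign r src e e'" and ?k = "arnold_coeff r src tgt ws vs i"
  let ?d = "if ws ! i = e then ?c else 1"
  have "?c ^ count_list ws e = ?c ^ count_list (take i ws @ drop (Suc i) ws) e * ?d"
    using count_list_remove_nth[OF i, of e] by auto
  moreover have "arnold_coeff r src tgt (map (id(e := e')) ws) vs i = ?d * ?k"
    using circ_eps_subst[OF circ i odd] odd by (simp add: arnold_coeff_def)
  ultimately have "?c ^ count_list ws e * arnold_coeff r src tgt (map (id(e := e')) ws) vs i =
      ?c ^ count_list (take i ws @ drop (Suc i) ws) e * (?d * ?d) * ?k"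
    by (simp add: mult_ac)
  also have "?d * ?d = 1"
    by (simp add: parallel_sign_def)
  finally show ?thesis
    by (metis mult.commute mult_1_right)
qed

lemma edge_subst_arnold:
  assumes circ: "is_circuit E src tgt ws vs"
  shows "edge_subst r e e' (parallel_sign r src e e') (arnold r src tgt ws vs) =
    lam_smul (parallel_sign r src e e' ^ count_list ws e) (arnold r src tgt (map (id(e := e')) ws) vs)"
proof -
  let ?c = "parallel_sign r src e e'" and ?\<sigma> = "id(e := e')"
  have len: "length ws \<noteq> 1" "length (map ?\<sigma> ws) \<noteq> 1"
    using is_circuit_length_ne_1[OF circ loop_free] by auto
  have "set (take i ws @ drop (Suc i) ws) \<subseteq> E" for i
    using is_circuit_edges[OF circ] by (auto dest: in_set_takeD in_set_dropD)
  then have "edge_subst r e e' ?c (arnold r src tgt ws vs) =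
      (\<lambda>S. \<Sum>i<length ws. arnold_coeff r src tgt ws vs i *
        (?c ^ count_list (take i ws @ drop (Suc i) ws) e *
          lam_mono r (take i (map ?\<sigma> ws) @ drop (Suc i) (map ?\<sigma> ws)) S))"
    by (simp add: arnold_eq_sum[OF len(1)] edge_subst_lincomb lam_smul_def take_map drop_map
        edge_subst_lam_mono[OF finite_E e_in_E e'_in_E e'_ne_e])
  also have "\<dots> = lam_smul (?c ^ count_list ws e) (arnold r src tgt (map ?\<sigma> ws) vs)"
    unfolding arnold_eq_sum[OF len(2)] length_map lam_smul_def sum_distrib_left
    by (intro ext sum.cong refl)
      (simp only: lessThan_iff mult.assoc[symmetric] arnold_coeff_subst[OF circ])
  finally show ?thesis .
qed

lemma arnold_pair_is_circuit: "is_circuit E src tgt [e, e'] [src e, tgt e]"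
  using e_in_E e'_in_E parallel unfolding is_circuit_def
  by (auto simp: less_Suc_eq numeral_2_eq_2 insert_commute)

lemma parallel_gen_diff_eq_arnold:
  "(\<lambda>S. lam_gen e S - parallel_sign r src e e' * lam_gen e' S) =
    lam_smul (if even r then 1 else - parallel_sign r src e e') (arnold r src tgt [e, e'] [src e, tgt e])"
proof -
  have gen_one: "lam_mult r (lam_gen x) lam_one = lam_gen x" for x
    by (simp add: fun_eq_iff lam_mult_one_right lam_gen_def)
  have "arnold r src tgt [e, e'] [src e, tgt e] =
      (\<lambda>S. (if even r then -1 else 1) * lam_gen e' S +
        (if even r then 1 else circ_eps src tgt [e, e'] [src e, tgt e] 1) * lam_gen e S)"
    by (simp add: arnold_def numeral_2_eq_2 circ_eps_def gen_one)
  then show ?thesis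
    using parallel_orientation loop_free e_in_E
    by (auto simp: fun_eq_iff lam_smul_def parallel_sign_def circ_eps_def)
qed

lemma edge_subst_arnold_ideal:
  "edge_subst r e e' (parallel_sign r src e e') ` arnold_ideal r E src tgt \<subseteq> arnold_ideal r (E - {e}) src tgt"
proof -
  have finite_E': "finite (E - {e})"
    using finite_E by simp
  have J: "ideal (arnold_ideal r (E - {e}) src tgt) (Lambda r (E - {e}))"
    using finite_E' by (rule arnold_ideal_is_ideal)
  let ?G = "{arnold r src tgt ws vs | ws vs. is_circuit E src tgt ws vs}"
  have "?G \<subseteq> carrier (Lambda r E)"
    using arnold_carrier by blast
  moreover have "edge_subst r e e' (parallel_sign r src e e') ` ?G \<subseteq> arnold_ideal r (E - {e}) src tgt"
  proof clarify
    fix ws vs assume circ: "is_circuit E src tgt ws vs"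
    show "edge_subst r e e' (parallel_sign r src e e') (arnold r src tgt ws vs) \<in> arnold_ideal r (E - {e}) src tgt"
      unfolding edge_subst_arnold[OF circ]
      by (rule lam_smul_in_ideal[OF finite_E' J arnold_in_arnold_ideal[OF finite_E' is_circuit_subst[OF circ]]])
  qed
  ultimately show ?thesis
    unfolding arnold_ideal_def[of r E]
    by (rule ring_hom_ring.genideal_image_subset[OF edge_subst_ring_hom[OF finite_E e_in_E e'_in_E e'_ne_e] J])
qed

lemma diff_edge_subst_in_arnold_ideal:
  assumes f: "f \<in> carrier (Lambda r E)"
  shows "f \<ominus>\<^bsub>Lambda r E\<^esub> edge_subst r e e' (parallel_sign r src e e') f \<in> arnold_ideal r E src tgt"
proof -
  let ?c = "parallel_sign r src e e'"
  let ?A = "arnold r src tgt [e, e'] [src e, tgt e]"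
  have "edge_subst r e e' ?c f \<in> carrier (Lambda r E)"
    using edge_subst_carrier[OF finite_E e_in_E e'_in_E e'_ne_e f] Lambda_carrier_mono[of "E - {e}" E]
    by blast
  then have "f \<ominus>\<^bsub>Lambda r E\<^esub> edge_subst r e e' ?c f =
      lam_mult r (\<lambda>S. lam_gen e S - ?c * lam_gen e' S) (lam_cofactor r e f)"
    using a_minus_Lambda[OF finite_E f] edge_subst_diff[OF finite_E f] by simp
  also have "\<dots> = lam_smul (if even r then 1 else - ?c) (lam_mult r ?A (lam_cofactor r e f))"
    unfolding parallel_gen_diff_eq_arnold lam_mult_smul_left ..
  also have "\<dots> \<in> arnold_ideal r E src tgt"
  proof -
    have "lam_cofactor r e f \<in> carrier (Lambda r E)"
      using lam_cofactor_carrier[OF f] Lambda_carrier_mono[of "E - {e}" E] by blast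
    then have "lam_mult r ?A (lam_cofactor r e f) \<in> arnold_ideal r E src tgt"
      using ideal.I_r_closed[OF arnold_ideal_is_ideal[OF finite_E]
          arnold_in_arnold_ideal[OF finite_E arnold_pair_is_circuit]]
      by (simp add: mult_Lambda)
    then show ?thesis
      by (rule lam_smul_in_ideal[OF finite_E arnold_ideal_is_ideal[OF finite_E]])
  qed
  finally show ?thesis .
qed

end

theorem mainTheorem4:
  fixes r :: nat and V :: "'v set" and E :: "'e::linorder set"
    and src tgt :: "'e \<Rightarrow> 'v" and e e' :: 'e
  assumes "r \<ge> 1"
    and "finite V" and "finite E"
    and "\<forall>x\<in>E. src x \<in> V \<and> tgt x \<in> V"
    and "\<forall>x\<in>E. src x \<noteq> tgt x"
    and "e \<in> E" and "e' \<in> E" and "e' \<noteq> e"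
    and "{src e', tgt e'} = {src e, tgt e}"
  shows "Rring r E src tgt \<simeq> Rring r (E - {e}) src tgt"
  unfolding Rring_def
proof (rule ring_iso_Quot_of_retraction)
  let ?c = "parallel_sign r src e e'"
  note edge_facts = assms(3) assms(6-8)
  show "ring_hom_ring (Lambda r E) (Lambda r (E - {e})) (edge_subst r e e' ?c)"
    using edge_facts by (rule edge_subst_ring_hom)
  show "carrier (Lambda r (E - {e})) \<subseteq> carrier (Lambda r E)"
    by (rule Lambda_carrier_mono) blast
  show "edge_subst r e e' ?c f = f" if "f \<in> carrier (Lambda r (E - {e}))" for f
    using edge_facts that by (rule edge_subst_retraction)
  show "ideal (arnold_ideal r E src tgt) (Lambda r E)"
    "ideal (arnold_ideal r (E - {e}) src tgt) (Lambda r (E - {e}))"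
    using assms(3) by (simp_all add: arnold_ideal_is_ideal)
  show "edge_subst r e e' ?c ` arnold_ideal r E src tgt \<subseteq> arnold_ideal r (E - {e}) src tgt"
    using edge_facts assms(5,9) by (rule edge_subst_arnold_ideal)
  show "arnold_ideal r (E - {e}) src tgt \<subseteq> arnold_ideal r E src tgt"
    using assms(3) by (rule arnold_ideal_mono) blast
  show "f \<ominus>\<^bsub>Lambda r E\<^esub> edge_subst r e e' ?c f \<in> arnold_ideal r E src tgt"
    if "f \<in> carrier (Lambda r E)" for f
    using edge_facts assms(5,9) that by (rule diff_edge_subst_in_arnold_ideal)
qed

end
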